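(* For any non-negative integer $n$, \[\sum_{\sigma\in S_n}(-1)^{p_-(\sigma)}\,C\bigl(p_-(\sigma),\lfloor n/2\rfloor-p_-(\sigma)\bigr)=2^{2\lfloor n/2\rfloor},\] and for any even positive integer $n$, \[\sum_{\sigma\in S_n}(-1)^{p_+(\sigma)}\,C\bigl(p_+(\sigma),n/2-p_+(\sigma)\bigr)=0.\]
   Context: $S_n$ is the symmetric group on $\{1,\ldots,n\}$. For $\sigma\in S_n$, with the convention $\sigma(0)=0$, let $p_+(\sigma)=\#\{i\in\{1,\ldots,n-1\}:\sigma(i-1)<\sigma(i)>\sigma(i+1)\}$ and $p_-(\sigma)=\#\{i\in\{2,\ldots,n-1\}:\sigma(i-1)<\sigma(i)>\sigma(i+1)\}$. $C(p,q)=\frac{(2p)!(2q)!}{p!(p+q)!q!}$. *)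

theory Defs
  imports Complex_Main "HOL-Combinatorics.Permutations"
begin

text \<open>Permutations of {1..n} are functions nat => nat with sigma permutes {1..n};
  such a sigma fixes 0, matching the convention sigma(0) = 0.\<close>

definition peak_plus :: "nat \<Rightarrow> (nat \<Rightarrow> nat) \<Rightarrow> nat" where
  "peak_plus n \<sigma> = card {i \<in> {1..n-1}. \<sigma> (i-1) < \<sigma> i \<and> \<sigma> i > \<sigma> (i+1)}"

definition peak_minus :: "nat \<Rightarrow> (nat \<Rightarrow> nat) \<Rightarrow> nat" where
  "peak_minus n \<sigma> = card {i \<in> {2..n-1}. \<sigma> (i-1) < \<sigma> i \<and> \<sigma> i > \<sigma> (i+1)}"

definition Ccoef :: "nat \<Rightarrow> nat \<Rightarrow> real" where
  "Ccoef p q = real (fact (2*p) * fact (2*q)) / real (fact p * fact (p+q) * fact q)"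

end

theory Submission
  imports Defs "HOL-Combinatorics.Multiset_Permutations"
begin

(* Build a permutation of {1..n+1} by inserting n+1 into a permutation of {1..n}, written as a
   word with k interior peaks. Inserting at either end or immediately before or after a peak keeps
   k peaks (2k+2 slots); each of the remaining n-1-2k slots creates one new peak. For the weight
   w n k = (-1)^k C(k, n div 2 - k), the contiguity relations of C give
   (2k+2) w (n+1) k + (n-1-2k) w (n+1) (k+1) = w n k or 4 w n k according as n is even or odd,
   so the weighted sum over S_n is 4^(n div 2). For p_+ the word is prefixed by sigma(0) = 0, in
   front of which nothing is inserted, leaving 2k+1 peak-preserving slots; when n+1 is even the
   resulting combination of weights vanishes for every k, so the sum is 0. *)

definition insert_at :: "nat \<Rightarrow> 'a \<Rightarrow> 'a list \<Rightarrow> 'a list" where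
  "insert_at j x xs = take j xs @ x # drop j xs"

lemma length_insert_at [simp]: "j \<le> length xs \<Longrightarrow> length (insert_at j x xs) = Suc (length xs)"
  by (simp add: insert_at_def)

lemma nth_insert_at:
  "j \<le> length xs \<Longrightarrow>
    insert_at j x xs ! i = (if i < j then xs ! i else if i = j then x else xs ! (i - 1))"
  by (simp add: insert_at_def nth_append nth_Cons' min_def)

lemma set_insert_at [simp]: "set (insert_at j x xs) = insert x (set xs)"
  using set_append [of "take j xs" "drop j xs"] by (simp add: insert_at_def)

lemma distinct_insert_at: "distinct xs \<Longrightarrow> x \<notin> set xs \<Longrightarrow> distinct (insert_at j x xs)"
  using distinct_append [of "take j xs" "drop j xs"] set_append [of "take j xs" "drop j xs"]
  by (auto simp: insert_at_def)

lemma remove1_insert_at: "x \<notin> set xs \<Longrightarrow> remove1 x (insert_at j x xs) = xs"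
  unfolding insert_at_def by (auto simp: remove1_append dest: in_set_takeD)

lemma length_takeWhile_insert_at:
  "x \<notin> set xs \<Longrightarrow> j \<le> length xs \<Longrightarrow> length (takeWhile (\<lambda>y. y \<noteq> x) (insert_at j x xs)) = j"
  unfolding insert_at_def by (subst takeWhile_append2) (auto dest: in_set_takeD)

lemma Cons_insert_at: "y # insert_at j x xs = insert_at (Suc j) x (y # xs)"
  by (simp add: insert_at_def)

lemma insert_at_split:
  assumes "x \<in> set zs"
  shows "length (takeWhile (\<lambda>y. y \<noteq> x) zs) \<le> length (remove1 x zs)"
    and "insert_at (length (takeWhile (\<lambda>y. y \<noteq> x) zs)) x (remove1 x zs) = zs"
proof -
  obtain us vs where zs: "zs = us @ x # vs" and x: "x \<notin> set us"
    using split_list_first [OF assms] by blast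
  have "takeWhile (\<lambda>y. y \<noteq> x) zs = us"
    unfolding zs using x by (subst takeWhile_append2) auto
  moreover have "remove1 x zs = us @ vs"
    unfolding zs using x by (simp add: remove1_append)
  ultimately
  show "length (takeWhile (\<lambda>y. y \<noteq> x) zs) \<le> length (remove1 x zs)"
    "insert_at (length (takeWhile (\<lambda>y. y \<noteq> x) zs)) x (remove1 x zs) = zs"
    by (simp_all add: insert_at_def zs)
qed

lemma bij_betw_insert_at_permutations_of_set:
  assumes "x \<notin> A"
  shows "bij_betw (\<lambda>(ys, j). insert_at j x ys)
    (permutations_of_set A \<times> {0..card A}) (permutations_of_set (insert x A))"
proof (rule bij_betw_byWitness
    [where f' = "\<lambda>zs. (remove1 x zs, length (takeWhile (\<lambda>y. y \<noteq> x) zs))"], goal_cases)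
  case 1
  show ?case
    using assms by (auto simp: remove1_insert_at length_takeWhile_insert_at permutations_of_set_def
        length_finite_permutations_of_set)
next
  case 2
  show ?case
    by (auto simp: insert_at_split permutations_of_set_def)
next
  case 3
  show ?case
    using assms by (auto simp: permutations_of_set_def distinct_insert_at)
next
  case 4
  show ?case
  proof (rule image_subsetI)
    fix zs assume zs: "zs \<in> permutations_of_set (insert x A)"
    then have "remove1 x zs \<in> permutations_of_set A"
      using assms by (auto simp: permutations_of_set_def)
    moreover have "length (takeWhile (\<lambda>y. y \<noteq> x) zs) \<le> card A"
      using insert_at_split(1) [of x zs] zs calculation
      by (auto simp: permutations_of_set_def length_finite_permutations_of_set)
    ultimately show "(remove1 x zs, length (takeWhile (\<lambda>y. y \<noteq> x) zs))
        \<in> permutations_of_set A \<times> {0..card A}"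
      by simp
  qed
qed

lemma sum_permutations_of_set_insert:
  assumes "x \<notin> A"
  shows "(\<Sum>zs\<in>permutations_of_set (insert x A). g zs)
    = (\<Sum>ys\<in>permutations_of_set A. \<Sum>j\<in>{0..card A}. g (insert_at j x ys))"
proof -
  have "(\<Sum>zs\<in>permutations_of_set (insert x A). g zs)
      = (\<Sum>(ys, j)\<in>permutations_of_set A \<times> {0..card A}. g (insert_at j x ys))"
    using sum.reindex_bij_betw [OF bij_betw_insert_at_permutations_of_set [OF assms], of g]
    by (simp add: case_prod_beta)
  then show ?thesis
    by (simp add: sum.cartesian_product)
qed

lemma bij_betw_map_permutes:
  assumes "distinct xs"
  shows "bij_betw (\<lambda>\<sigma>. map \<sigma> xs) {\<sigma>. \<sigma> permutes set xs} (permutations_of_set (set xs))"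
proof -
  have inj: "inj_on (\<lambda>\<sigma>. map \<sigma> xs) {\<sigma>. \<sigma> permutes set xs}"
  proof (rule inj_onI)
    fix \<sigma> \<tau> assume "\<sigma> \<in> {\<sigma>. \<sigma> permutes set xs}" "\<tau> \<in> {\<sigma>. \<sigma> permutes set xs}"
      and "map \<sigma> xs = map \<tau> xs"
    then show "\<sigma> = \<tau>"
      by (intro ext) (metis map_eq_conv mem_Collect_eq permutes_not_in)
  qed
  have subset: "(\<lambda>\<sigma>. map \<sigma> xs) ` {\<sigma>. \<sigma> permutes set xs} \<subseteq> permutations_of_set (set xs)"
  proof (rule image_subsetI)
    fix \<sigma> assume "\<sigma> \<in> {\<sigma>. \<sigma> permutes set xs}"
    then have "\<sigma> permutes set xs"
      by simp
    then show "map \<sigma> xs \<in> permutations_of_set (set xs)"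
      using assms
      by (auto simp: permutations_of_set_def permutes_image distinct_map permutes_inj_on)
  qed
  have "card ((\<lambda>\<sigma>. map \<sigma> xs) ` {\<sigma>. \<sigma> permutes set xs}) = card (permutations_of_set (set xs))"
    using inj by (simp add: card_image card_permutations)
  then show ?thesis
    using inj subset by (simp add: bij_betw_def card_subset_eq)
qed

definition peaks :: "'a::linorder list \<Rightarrow> nat set" where
  "peaks xs = {i. 0 < i \<and> Suc i < length xs \<and> xs ! (i - 1) < xs ! i \<and> xs ! Suc i < xs ! i}"

lemma peaks_subset: "peaks xs \<subseteq> {1..<length xs - 1}"
  unfolding peaks_def by auto

lemma finite_peaks [simp]: "finite (peaks xs)"
  using peaks_subset finite_subset by blast

lemma Suc_notin_peaks: "i \<in> peaks xs \<Longrightarrow> Suc i \<notin> peaks xs"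
  unfolding peaks_def by auto

lemma mem_peaks_insert_at_max:
  assumes j: "j \<le> length xs" and max: "\<forall>y\<in>set xs. y < x"
  shows "i \<in> peaks (insert_at j x xs) \<longleftrightarrow>
    (i \<in> peaks xs \<and> Suc i < j) \<or> (i - 1 \<in> peaks xs \<and> Suc j < i) \<or> (i = j \<and> 0 < j \<and> j < length xs)"
proof -
  have max': "xs ! k < x" if "k < length xs" for k
    using max that by auto
  consider "Suc i < j" | "Suc i = j" | "i = j" | "i = Suc j" | "Suc j < i"
    by linarith
  then show ?thesis
  proof cases
    case 1
    then show ?thesis using j by (simp add: peaks_def nth_insert_at)
  next
    case 2
    then show ?thesis using j max' [of i] by (auto simp: peaks_def nth_insert_at)
  next
    case 3
    then show ?thesis using j max' [of "i - 1"] max' [of i] by (auto simp: peaks_def nth_insert_at)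
  next
    case 4
    then show ?thesis using j max' [of j] by (auto simp: peaks_def nth_insert_at)
  next
    case 5
    then show ?thesis using j by (auto simp: peaks_def nth_insert_at)
  qed
qed

lemma peaks_insert_at_max:
  assumes j: "j \<le> length xs" and max: "\<forall>y\<in>set xs. y < x"
  shows "peaks (insert_at j x xs) = {i \<in> peaks xs. Suc i < j} \<union> Suc ` {i \<in> peaks xs. j < i}
    \<union> (if 0 < j \<and> j < length xs then {j} else {})"
proof (rule set_eqI)
  fix i
  have "i \<in> Suc ` {i \<in> peaks xs. j < i} \<longleftrightarrow> i - 1 \<in> peaks xs \<and> Suc j < i"
    by (cases i) auto
  then show "i \<in> peaks (insert_at j x xs) \<longleftrightarrow> i \<in> {i \<in> peaks xs. Suc i < j}
      \<union> Suc ` {i \<in> peaks xs. j < i} \<union> (if 0 < j \<and> j < length xs then {j} else {})"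
    by (auto simp: mem_peaks_insert_at_max [OF j max])
qed

lemma card_peaks_Int_adjacent:
  "card (peaks xs \<inter> {j - 1, j}) = (if j \<in> peaks xs \<union> Suc ` peaks xs then 1 else 0)"
proof (cases "j \<in> peaks xs")
  case True
  then have "peaks xs \<inter> {j - 1, j} = {j}"
    using Suc_notin_peaks [of "j - 1" xs] by (cases j) auto
  then show ?thesis
    using True by simp
next
  case False
  then have "peaks xs \<inter> {j - 1, j} = (if j \<in> Suc ` peaks xs then {j - 1} else {})"
    by (cases j) auto
  then show ?thesis
    using False by simp
qed

definition peak_preserving_slots :: "'a::linorder list \<Rightarrow> nat set" where
  "peak_preserving_slots xs = {0, length xs} \<union> peaks xs \<union> Suc ` peaks xs"

lemma card_peaks_insert_at_max:
  assumes j: "j \<le> length xs" and max: "\<forall>y\<in>set xs. y < x"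
  shows "card (peaks (insert_at j x xs)) =
    card (peaks xs) + (if j \<in> peak_preserving_slots xs then 0 else 1)"
proof -
  let ?P = "peaks xs"
  define A where "A = {i \<in> ?P. Suc i < j}"
  define B where "B = {i \<in> ?P. j < i}"
  define D where "D = (if 0 < j \<and> j < length xs then {j} else {})"
  have finite: "finite A" "finite B" "finite D"
    unfolding A_def B_def D_def by auto
  have "A \<inter> B = {}" "(A \<union> B) \<inter> (?P \<inter> {j - 1, j}) = {}"
    by (auto simp: A_def B_def)
  moreover have "card ?P = card (A \<union> B \<union> (?P \<inter> {j - 1, j}))"
    by (rule arg_cong [where f = card]) (auto simp: A_def B_def)
  ultimately have card_old: "card ?P = card A + card B + card (?P \<inter> {j - 1, j})"
    using finite by (simp add: card_Un_disjoint)
  have "A \<inter> Suc ` B = {}" "(A \<union> Suc ` B) \<inter> D = {}"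
    by (auto simp: A_def B_def D_def)
  then have card_new: "card (peaks (insert_at j x xs)) = card A + card B + card D"
    using finite by (simp add: peaks_insert_at_max [OF j max] A_def [symmetric] B_def [symmetric]
        D_def [symmetric] card_Un_disjoint card_image)
  have "j \<notin> ?P \<union> Suc ` ?P" if "j \<in> {0, length xs}"
    using that unfolding peaks_def by auto
  then show ?thesis
    unfolding card_old card_new card_peaks_Int_adjacent D_def peak_preserving_slots_def
    using j by auto
qed

lemma peak_preserving_slots_subset: "peak_preserving_slots xs \<subseteq> {0..length xs}"
  unfolding peak_preserving_slots_def peaks_def by auto

lemma card_peak_preserving_slots:
  assumes "xs \<noteq> []"
  shows "card (peak_preserving_slots xs) = 2 * card (peaks xs) + 2"
proof -
  let ?P = "peaks xs"
  have "0 \<notin> ?P \<union> Suc ` ?P" "length xs \<notin> ?P \<union> Suc ` ?P"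
    unfolding peaks_def by auto
  then have "card (peak_preserving_slots xs) = card {0, length xs} + card (?P \<union> Suc ` ?P)"
    unfolding peak_preserving_slots_def Un_assoc by (intro card_Un_disjoint) auto
  also have "card (?P \<union> Suc ` ?P) = card ?P + card (Suc ` ?P)"
    using Suc_notin_peaks by (intro card_Un_disjoint) auto
  finally show ?thesis
    using assms by (simp add: card_image)
qed

lemma sum_insert_at_max_slots:
  fixes f :: "nat \<Rightarrow> 'b::comm_semiring_1"
  assumes S: "S \<subseteq> {0..length xs}" and max: "\<forall>y\<in>set xs. y < x"
  shows "(\<Sum>j\<in>S. f (card (peaks (insert_at j x xs)))) =
    of_nat (card (S \<inter> peak_preserving_slots xs)) * f (card (peaks xs))
    + of_nat (card (S - peak_preserving_slots xs)) * f (Suc (card (peaks xs)))"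
proof -
  let ?N = "peak_preserving_slots xs"
  have "finite S"
    using S finite_subset by blast
  then have "(\<Sum>j\<in>S. f (card (peaks (insert_at j x xs))))
      = (\<Sum>j\<in>S \<inter> ?N. f (card (peaks (insert_at j x xs))))
        + (\<Sum>j\<in>S - ?N. f (card (peaks (insert_at j x xs))))"
    by (rule sum.Int_Diff)
  also have "\<dots> = (\<Sum>j\<in>S \<inter> ?N. f (card (peaks xs))) + (\<Sum>j\<in>S - ?N. f (Suc (card (peaks xs))))"
    using S
    by (intro arg_cong2 [where f = "(+)"] sum.cong) (auto simp: card_peaks_insert_at_max [OF _ max])
  finally show ?thesis
    by simp
qed

lemma card_peaks_le: "xs \<noteq> [] \<Longrightarrow> 2 * card (peaks xs) + 1 \<le> length xs"
  using card_mono [OF _ peak_preserving_slots_subset, of xs] card_peak_preserving_slots [of xs]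
  by simp

lemma card_not_peak_preserving_slots:
  "xs \<noteq> [] \<Longrightarrow>
    card ({0..length xs} - peak_preserving_slots xs) = length xs - 1 - 2 * card (peaks xs)"
  using card_peak_preserving_slots [of xs] peak_preserving_slots_subset [of xs]
  by (simp add: card_Diff_subset finite_subset)

lemma sum_insert_at_max:
  fixes f :: "nat \<Rightarrow> 'b::comm_semiring_1"
  assumes "xs \<noteq> []" and "\<forall>y\<in>set xs. y < x"
  shows "(\<Sum>j\<in>{0..length xs}. f (card (peaks (insert_at j x xs)))) =
    of_nat (2 * card (peaks xs) + 2) * f (card (peaks xs))
    + of_nat (length xs - 1 - 2 * card (peaks xs)) * f (Suc (card (peaks xs)))"
  using sum_insert_at_max_slots [OF order.refl assms(2), of f] peak_preserving_slots_subset [of xs]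
    card_peak_preserving_slots [OF assms(1)] card_not_peak_preserving_slots [OF assms(1)]
  by (simp add: Int_absorb1)

lemma sum_insert_at_max_nonzero_slots:
  fixes f :: "nat \<Rightarrow> 'b::comm_semiring_1"
  assumes "xs \<noteq> []" and "\<forall>y\<in>set xs. y < x"
  shows "(\<Sum>j\<in>{1..length xs}. f (card (peaks (insert_at j x xs)))) =
    of_nat (2 * card (peaks xs) + 1) * f (card (peaks xs))
    + of_nat (length xs - 1 - 2 * card (peaks xs)) * f (Suc (card (peaks xs)))"
proof -
  let ?N = "peak_preserving_slots xs"
  have "0 \<in> ?N"
    by (simp add: peak_preserving_slots_def)
  then have "{1..length xs} \<inter> ?N = ?N - {0}" "{1..length xs} - ?N = {0..length xs} - ?N"
    using peak_preserving_slots_subset [of xs] by (auto simp: Suc_le_eq intro!: gr0I)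
  then show ?thesis
    using sum_insert_at_max_slots [of "{1..length xs}", OF _ assms(2), of f] \<open>0 \<in> ?N\<close>
      card_peak_preserving_slots [OF assms(1)] card_not_peak_preserving_slots [OF assms(1)]
    by (simp add: finite_subset [OF peak_preserving_slots_subset])
qed

lemma Ccoef_eq: "Ccoef p q = fact (2 * p) * fact (2 * q) / (fact p * fact (p + q) * fact q)"
  unfolding Ccoef_def by simp

lemma Ccoef_commute: "Ccoef p q = Ccoef q p"
  unfolding Ccoef_def by (simp add: ac_simps)

lemma Ccoef_Suc_left: "real (p + q + 1) * Ccoef (Suc p) q = real (2 * (2 * p + 1)) * Ccoef p q"
proof -
  have num: "fact (2 * Suc p) = real (p + 1) * (real (2 * (2 * p + 1)) * fact (2 * p))"
    by (simp add: algebra_simps)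
  have den: "fact (Suc p) * fact (Suc p + q)
      = real (p + 1) * (real (p + q + 1) * (fact p * fact (p + q)))"
    by (simp add: algebra_simps)
  have nonzero: "real (p + 1) \<noteq> 0"
    by simp
  have "Ccoef (Suc p) q = real (2 * (2 * p + 1)) / real (p + q + 1) * Ccoef p q"
    unfolding Ccoef_eq num den times_divide_times_eq
    by (simp only: mult.assoc nonzero_mult_divide_mult_cancel_left [OF nonzero])
  then show ?thesis
    by simp
qed

lemma Ccoef_Suc_right: "real (p + q + 1) * Ccoef p (Suc q) = real (2 * (2 * q + 1)) * Ccoef p q"
  using Ccoef_Suc_left [of q p] by (simp add: Ccoef_commute ac_simps)

lemma Ccoef_shift: "real (2 * p + 1) * Ccoef p (Suc q) = real (2 * q + 1) * Ccoef (Suc p) q"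
proof -
  have "real (p + q + 1) * (real (2 * p + 1) * Ccoef p (Suc q))
      = real (p + q + 1) * (real (2 * q + 1) * Ccoef (Suc p) q)"
    using Ccoef_Suc_left [of p q] Ccoef_Suc_right [of p q] by (simp add: algebra_simps)
  then show ?thesis
    by (subst (asm) mult_left_cancel) simp_all
qed

lemma Ccoef_shift_diff:
  "real (2 * p + 2) * Ccoef p (Suc q) - real (2 * q) * Ccoef (Suc p) q = 4 * Ccoef p q"
proof -
  have "real (p + q + 1) * (real (2 * p + 2) * Ccoef p (Suc q) - real (2 * q) * Ccoef (Suc p) q)
      = real (p + q + 1) * (4 * Ccoef p q)"
    using Ccoef_Suc_left [of p q] Ccoef_Suc_right [of p q] by (simp add: algebra_simps)
  then show ?thesis
    by (subst (asm) mult_left_cancel) simp_all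
qed

definition peak_weight :: "nat \<Rightarrow> nat \<Rightarrow> real" where
  "peak_weight n k = (-1) ^ k * Ccoef k (n div 2 - k)"

lemma peak_weight_step:
  assumes "2 * k + 1 \<le> n"
  shows "real (2 * k + 2) * peak_weight (Suc n) k
      + real (n - 1 - 2 * k) * peak_weight (Suc n) (Suc k)
    = (if even n then 1 else 4) * peak_weight n k"
proof (cases "even n")
  case True
  obtain q where n: "n = 2 * (k + q + 1)"
  proof -
    from True obtain i where "n = 2 * i"
      by (rule evenE)
    with assms show ?thesis
      by (intro that [of "i - k - 1"]) auto
  qed
  have "real (2 * k + 2) * peak_weight (Suc n) k
        + real (n - 1 - 2 * k) * peak_weight (Suc n) (Suc k)
      = (-1) ^ k * (Ccoef k (Suc q)
        + (real (2 * k + 1) * Ccoef k (Suc q) - real (2 * q + 1) * Ccoef (Suc k) q))"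
    unfolding peak_weight_def n by (simp add: algebra_simps)
  also have "\<dots> = (-1) ^ k * Ccoef k (Suc q)"
    by (simp only: Ccoef_shift diff_self add_0_right)
  also have "\<dots> = peak_weight n k"
    unfolding peak_weight_def n by simp
  finally show ?thesis
    using True by simp
next
  case False
  obtain q where n: "n = 2 * (k + q) + 1"
  proof -
    from False obtain i where "n = 2 * i + 1"
      by (rule oddE)
    with assms show ?thesis
      by (intro that [of "i - k"]) auto
  qed
  have "real (2 * k + 2) * peak_weight (Suc n) k
        + real (n - 1 - 2 * k) * peak_weight (Suc n) (Suc k)
      = (-1) ^ k * (real (2 * k + 2) * Ccoef k (Suc q) - real (2 * q) * Ccoef (Suc k) q)"
    unfolding peak_weight_def n by (simp add: algebra_simps)
  also have "\<dots> = 4 * peak_weight n k"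
    unfolding peak_weight_def n Ccoef_shift_diff by simp
  finally show ?thesis
    using False by simp
qed

lemma peak_weight_step_odd:
  assumes "odd m" "2 * k \<le> m"
  shows "real (2 * k + 1) * peak_weight (Suc m) k + real (m - 2 * k) * peak_weight (Suc m) (Suc k)
    = 0"
proof -
  obtain q where m: "m = 2 * (k + q) + 1"
  proof -
    from assms(1) obtain i where "m = 2 * i + 1"
      by (rule oddE)
    with assms(2) show ?thesis
      by (intro that [of "i - k"]) auto
  qed
  have "real (2 * k + 1) * peak_weight (Suc m) k + real (m - 2 * k) * peak_weight (Suc m) (Suc k)
      = (-1) ^ k * (real (2 * k + 1) * Ccoef k (Suc q) - real (2 * q + 1) * Ccoef (Suc k) q)"
    unfolding peak_weight_def m by (simp add: algebra_simps)
  also have "\<dots> = 0"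
    by (simp only: Ccoef_shift diff_self mult_zero_right)
  finally show ?thesis .
qed

lemma sum_permutations_of_set_atLeastAtMost_Suc:
  "(\<Sum>zs\<in>permutations_of_set {1..Suc n}. g zs)
    = (\<Sum>ys\<in>permutations_of_set {1..n}. \<Sum>j\<in>{0..n}. g (insert_at j (Suc n) ys))"
  using sum_permutations_of_set_insert [of "Suc n" "{1..n}" g] by (simp add: atLeastAtMostSuc_conv)

lemma permutations_of_set_atLeastAtMostD:
  "ys \<in> permutations_of_set {1..n} \<Longrightarrow> length ys = n \<and> (\<forall>y\<in>set ys. y < Suc n)"
  by (auto simp: permutations_of_set_def length_finite_permutations_of_set)

lemma sum_peak_weight_peaks:
  "(\<Sum>xs\<in>permutations_of_set {1..n}. peak_weight n (card (peaks xs))) = 4 ^ (n div 2)"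
proof (induction n)
  case 0
  then show ?case
    by (simp add: peaks_def peak_weight_def Ccoef_def)
next
  case (Suc n)
  show ?case
  proof (cases "n = 0")
    case True
    then show ?thesis
      by (simp add: peaks_def peak_weight_def Ccoef_def)
  next
    case False
    have step: "(\<Sum>j\<in>{0..n}. peak_weight (Suc n) (card (peaks (insert_at j (Suc n) ys))))
        = (if even n then 1 else 4) * peak_weight n (card (peaks ys))"
      if ys: "ys \<in> permutations_of_set {1..n}" for ys
    proof -
      have length: "length ys = n" and max: "\<forall>y\<in>set ys. y < Suc n" and nonempty: "ys \<noteq> []"
        using permutations_of_set_atLeastAtMostD [OF ys] False by auto
      have "(\<Sum>j\<in>{0..n}. peak_weight (Suc n) (card (peaks (insert_at j (Suc n) ys))))
          = real (2 * card (peaks ys) + 2) * peak_weight (Suc n) (card (peaks ys))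
            + real (n - 1 - 2 * card (peaks ys)) * peak_weight (Suc n) (Suc (card (peaks ys)))"
        using sum_insert_at_max [OF nonempty max, of "peak_weight (Suc n)"] unfolding length .
      also have "\<dots> = (if even n then 1 else 4) * peak_weight n (card (peaks ys))"
        using card_peaks_le [OF nonempty] unfolding length by (rule peak_weight_step)
      finally show ?thesis .
    qed
    have "(\<Sum>xs\<in>permutations_of_set {1..Suc n}. peak_weight (Suc n) (card (peaks xs)))
        = (\<Sum>ys\<in>permutations_of_set {1..n}.
            (if even n then 1 else 4) * peak_weight n (card (peaks ys)))"
      unfolding sum_permutations_of_set_atLeastAtMost_Suc by (rule sum.cong) (simp_all add: step)
    also have "\<dots> = (if even n then 1 else 4) * 4 ^ (n div 2)"
      by (simp only: Suc.IH flip: sum_distrib_left)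
    also have "\<dots> = 4 ^ (Suc n div 2)"
      by (auto elim: evenE oddE)
    finally show ?thesis .
  qed
qed

lemma sum_peak_weight_peaks_leading_zero:
  assumes "odd m"
  shows "(\<Sum>xs\<in>permutations_of_set {1..Suc m}. peak_weight (Suc m) (card (peaks (0 # xs)))) = 0"
proof -
  have "(\<Sum>j\<in>{0..m}. peak_weight (Suc m) (card (peaks (0 # insert_at j (Suc m) ys)))) = 0"
    if ys: "ys \<in> permutations_of_set {1..m}" for ys
  proof -
    have "length (0 # ys) = Suc m" "\<forall>y\<in>set (0 # ys). y < Suc m"
      using permutations_of_set_atLeastAtMostD [OF ys] by auto
    moreover have "(\<Sum>j\<in>{0..m}. peak_weight (Suc m) (card (peaks (0 # insert_at j (Suc m) ys))))
        = (\<Sum>j\<in>{1..Suc m}. peak_weight (Suc m) (card (peaks (insert_at j (Suc m) (0 # ys)))))"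
      unfolding Cons_insert_at
      using sum.shift_bounds_cl_Suc_ivl
          [of "\<lambda>j. peak_weight (Suc m) (card (peaks (insert_at j (Suc m) (0 # ys))))" 0 m]
      by simp
    ultimately show ?thesis
      using sum_insert_at_max_nonzero_slots [of "0 # ys" "Suc m" "peak_weight (Suc m)"]
        card_peaks_le [of "0 # ys"] peak_weight_step_odd [OF assms]
      by simp
  qed
  then show ?thesis
    unfolding sum_permutations_of_set_atLeastAtMost_Suc by (simp add: Cons_insert_at)
qed

lemma sum_permutes_atLeastAtMost:
  "(\<Sum>\<sigma>\<in>{\<sigma>. \<sigma> permutes {1..n}}. g (map \<sigma> [1..<Suc n]))
    = (\<Sum>xs\<in>permutations_of_set {1..n}. g xs)"
  using sum.reindex_bij_betw [OF bij_betw_map_permutes [OF distinct_upt [of 1 "Suc n"]], of g]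
  by (simp only: set_upt atLeastLessThanSuc_atLeastAtMost)

lemma peaks_map_upt:
  "peaks (map \<sigma> [a..<b]) =
    {i. 0 < i \<and> Suc i < b - a \<and> \<sigma> (a + i - 1) < \<sigma> (a + i) \<and> \<sigma> (a + Suc i) < \<sigma> (a + i)}"
  unfolding peaks_def by (auto simp: nth_map_upt)

lemma peak_minus_eq_card_peaks: "peak_minus n \<sigma> = card (peaks (map \<sigma> [1..<Suc n]))"
proof -
  have "{i \<in> {2..n-1}. \<sigma> (i - 1) < \<sigma> i \<and> \<sigma> i > \<sigma> (i + 1)}
      = Suc ` peaks (map \<sigma> [1..<Suc n])"
  proof (rule set_eqI)
    fix i
    have "i \<in> Suc ` peaks (map \<sigma> [1..<Suc n])
        \<longleftrightarrow> 0 < i \<and> i - 1 \<in> peaks (map \<sigma> [1..<Suc n])"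
      by (cases i) auto
    then show "i \<in> {i \<in> {2..n-1}. \<sigma> (i - 1) < \<sigma> i \<and> \<sigma> i > \<sigma> (i + 1)}
        \<longleftrightarrow> i \<in> Suc ` peaks (map \<sigma> [1..<Suc n])"
      unfolding peaks_map_upt by auto
  qed
  then show ?thesis
    unfolding peak_minus_def by (simp add: card_image)
qed

lemma peak_plus_eq_card_peaks:
  "\<sigma> 0 = 0 \<Longrightarrow> peak_plus n \<sigma> = card (peaks (0 # map \<sigma> [1..<Suc n]))"
proof -
  assume "\<sigma> 0 = 0"
  then have "0 # map \<sigma> [1..<Suc n] = map \<sigma> [0..<Suc n]"
    by (simp add: upt_rec)
  moreover have "{i \<in> {1..n-1}. \<sigma> (i - 1) < \<sigma> i \<and> \<sigma> i > \<sigma> (i + 1)}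
      = peaks (map \<sigma> [0..<Suc n])"
    unfolding peaks_map_upt by auto
  ultimately show ?thesis
    unfolding peak_plus_def by simp
qed

lemma sum_permutes_peak_minus:
  "(\<Sum>\<sigma>\<in>{\<sigma>. \<sigma> permutes {1..n}}.
      (-1::real) ^ peak_minus n \<sigma> * Ccoef (peak_minus n \<sigma>) (n div 2 - peak_minus n \<sigma>))
    = 2 ^ (2 * (n div 2))"
proof -
  have "(\<Sum>\<sigma>\<in>{\<sigma>. \<sigma> permutes {1..n}}.
      (-1::real) ^ peak_minus n \<sigma> * Ccoef (peak_minus n \<sigma>) (n div 2 - peak_minus n \<sigma>))
      = (\<Sum>xs\<in>permutations_of_set {1..n}. peak_weight n (card (peaks xs)))"
    unfolding peak_minus_eq_card_peaks sum_permutes_atLeastAtMost [symmetric] peak_weight_def ..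
  also have "\<dots> = 4 ^ (n div 2)"
    by (rule sum_peak_weight_peaks)
  finally show ?thesis
    by (simp add: power_mult)
qed

lemma sum_permutes_peak_plus:
  assumes "even n" and "0 < n"
  shows "(\<Sum>\<sigma>\<in>{\<sigma>. \<sigma> permutes {1..n}}.
      (-1::real) ^ peak_plus n \<sigma> * Ccoef (peak_plus n \<sigma>) (n div 2 - peak_plus n \<sigma>)) = 0"
proof -
  obtain m where n: "n = Suc m" and "odd m"
    using assms by (cases n) auto
  have "(\<Sum>\<sigma>\<in>{\<sigma>. \<sigma> permutes {1..n}}.
      (-1::real) ^ peak_plus n \<sigma> * Ccoef (peak_plus n \<sigma>) (n div 2 - peak_plus n \<sigma>))
      = (\<Sum>\<sigma>\<in>{\<sigma>. \<sigma> permutes {1..n}}.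
          peak_weight n (card (peaks (0 # map \<sigma> [1..<Suc n]))))"
    by (intro sum.cong) (auto simp: peak_weight_def peak_plus_eq_card_peaks permutes_not_in)
  also have "\<dots> = 0"
    using sum_peak_weight_peaks_leading_zero [OF \<open>odd m\<close>]
    by (simp only: n sum_permutes_atLeastAtMost
        [where g = "\<lambda>xs. peak_weight (Suc m) (card (peaks (0 # xs)))"])
  finally show ?thesis .
qed

theorem corollary7p2:
  shows "(\<forall>n::nat. (\<Sum>\<sigma>\<in>{\<sigma>. \<sigma> permutes {1..n}}.
            (-1::real) ^ peak_minus n \<sigma> * Ccoef (peak_minus n \<sigma>) (n div 2 - peak_minus n \<sigma>))
          = 2 ^ (2 * (n div 2)))
       \<and> (\<forall>n::nat. even n \<and> 0 < n \<longrightarrow>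
          (\<Sum>\<sigma>\<in>{\<sigma>. \<sigma> permutes {1..n}}.
            (-1::real) ^ peak_plus n \<sigma> * Ccoef (peak_plus n \<sigma>) (n div 2 - peak_plus n \<sigma>)) = 0)"
  using sum_permutes_peak_minus sum_permutes_peak_plus by blast

end
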